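(* Let $D$ be an integral domain. Then $t\text{-}\dim(D)\le t\text{-}\dim(D[X]_A)\le t\text{-}\dim(D[X])$.
   Context: $X$ is an indeterminate over $D$, $A=\{f\in D[X]\mid f(0)=1\}$, and $D[X]_A$ is the localization at $A$. For an integral domain $E$ with quotient field $K$ and a nonzero fractional ideal $I$, let $I^{-1}=\{x\in K\mid xI\subseteq E\}$, $I_v=(I^{-1})^{-1}$, and $I_t=\bigcup J_v$ where $J$ ranges over the nonzero finitely generated fractional ideals contained in $I$. An ideal $I$ is a $t$-ideal if $I_t=I$; a prime $t$-ideal is a prime ideal that is a $t$-ideal; a maximal $t$-ideal is maximal among proper $t$-ideals. The $t$-height of a prime $t$-ideal $P$ is the supremum of $n$ such that there is a chain $P=P_0\supsetneq P_1\supsetneq\cdots\supsetneq P_n=(0)$ of prime $t$-ideals (with $(0)$ at the bottom), and $t\text{-}\dim(E)=\sup\{t\text{-ht}(P)\mid P \text{ a maximal } t\text{-ideal of } E\}$. *)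

theory Defs
  imports "HOL-Computational_Algebra.Polynomial" "HOL-Computational_Algebra.Fraction_Field"
    "HOL-Library.Extended_Nat"
begin

text \<open>An integral domain E is represented as a subring of an ambient field 'k
  (containing its quotient field). Inverses are taken inside 'k; for nonzero
  (fractional) ideals this coincides with taking them inside the quotient field of E.\<close>

definition is_ideal :: "'k::field set \<Rightarrow> 'k set \<Rightarrow> bool" where
  "is_ideal E I \<longleftrightarrow> I \<subseteq> E \<and> 0 \<in> I \<and> (\<forall>x\<in>I. \<forall>y\<in>I. x + y \<in> I) \<and> (\<forall>r\<in>E. \<forall>x\<in>I. r * x \<in> I)"

definition frac_inv :: "'k::field set \<Rightarrow> 'k set \<Rightarrow> 'k set" where
  "frac_inv E I = {x. \<forall>y\<in>I. x * y \<in> E}"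

definition v_closure :: "'k::field set \<Rightarrow> 'k set \<Rightarrow> 'k set" where
  "v_closure E I = frac_inv E (frac_inv E I)"

definition fin_gen :: "'k::field set \<Rightarrow> 'k set \<Rightarrow> 'k set" where
  "fin_gen E S = {(\<Sum>s\<in>S. c s * s) | c. \<forall>s\<in>S. c s \<in> E}"

definition t_closure :: "'k::field set \<Rightarrow> 'k set \<Rightarrow> 'k set" where
  "t_closure E I = \<Union>{v_closure E (fin_gen E S) | S. finite S \<and> S \<subseteq> I \<and>
      fin_gen E S \<noteq> {0} \<and> fin_gen E S \<subseteq> I}"

text \<open>t-ideals (integral); the zero ideal is a t-ideal by the usual convention.\<close>
definition is_t_ideal :: "'k::field set \<Rightarrow> 'k set \<Rightarrow> bool" where
  "is_t_ideal E I \<longleftrightarrow> is_ideal E I \<and> (I = {0} \<or> t_closure E I = I)"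

definition is_prime_ideal :: "'k::field set \<Rightarrow> 'k set \<Rightarrow> bool" where
  "is_prime_ideal E P \<longleftrightarrow> is_ideal E P \<and> P \<noteq> E \<and>
     (\<forall>a\<in>E. \<forall>b\<in>E. a * b \<in> P \<longrightarrow> a \<in> P \<or> b \<in> P)"

definition is_prime_t_ideal :: "'k::field set \<Rightarrow> 'k set \<Rightarrow> bool" where
  "is_prime_t_ideal E P \<longleftrightarrow> is_prime_ideal E P \<and> is_t_ideal E P"

definition is_max_t_ideal :: "'k::field set \<Rightarrow> 'k set \<Rightarrow> bool" where
  "is_max_t_ideal E M \<longleftrightarrow> is_t_ideal E M \<and> M \<noteq> E \<and>
     (\<forall>N. is_t_ideal E N \<and> N \<noteq> E \<and> M \<subseteq> N \<longrightarrow> N = M)"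

definition t_ht :: "'k::field set \<Rightarrow> 'k set \<Rightarrow> enat" where
  "t_ht E P = Sup {enat n | n. \<exists>c :: nat \<Rightarrow> 'k set. c 0 = P \<and> c n = {0} \<and>
      (\<forall>i<n. c (Suc i) \<subset> c i) \<and> (\<forall>i\<le>n. is_prime_t_ideal E (c i))}"

definition t_dim :: "'k::field set \<Rightarrow> enat" where
  "t_dim E = Sup {t_ht E P | P. is_max_t_ideal E P}"

text \<open>D inside its quotient field; D[X] and D[X]_A inside the quotient field of D[X].\<close>
definition dom_ring :: "'a::idom fract set" where
  "dom_ring = range (\<lambda>a. Fract a 1)"

definition poly_ring :: "'a::idom poly fract set" where
  "poly_ring = range (\<lambda>p. Fract p 1)"

definition loc_poly_ring :: "'a::idom poly fract set" where
  "loc_poly_ring = {Fract f g | f g. poly g 0 = 1}"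

end

theory Submission
  imports Defs
begin

text \<open>Both inequalities come from maps on prime t-ideals that are strictly monotone and fix
  the zero ideal: they carry chains of prime t-ideals to chains of the same length, and the top
  of the image chain lies in a maximal t-ideal by Zorn's lemma.
  For \<open>D \<rightarrow> D[X]\<^sub>A\<close> the map is \<open>P \<mapsto> P[X]\<^sub>A\<close>; it is prime by Gauss's lemma on coefficients,
  and it is a t-ideal because the v-closure of finitely many fractions \<open>f/g\<close> is controlled by
  the v-closure in \<open>D\<close> of the coefficients of the numerators.
  For \<open>D[X]\<^sub>A \<rightarrow> D[X]\<close> the map is contraction \<open>Q \<mapsto> Q \<inter> D[X]\<close>; it is strict because every
  element of \<open>D[X]\<^sub>A\<close> becomes polynomial after multiplication by a unit, and it preserves
  t-ideals because clearing denominators makes the v-operation of \<open>D[X]\<close> on finite sets finer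
  than that of \<open>D[X]\<^sub>A\<close>.\<close>

definition is_subring :: "'k::field set \<Rightarrow> bool" where
  "is_subring E \<longleftrightarrow> 0 \<in> E \<and> 1 \<in> E \<and> (\<forall>x\<in>E. \<forall>y\<in>E. x + y \<in> E \<and> x * y \<in> E \<and> - x \<in> E)"

definition v_closure_gens :: "'k::field set \<Rightarrow> 'k set \<Rightarrow> 'k set" where
  "v_closure_gens E S = {x. \<forall>y. (\<forall>s\<in>S. y * s \<in> E) \<longrightarrow> x * y \<in> E}"

lemma subring_is_ideal: "is_subring E \<Longrightarrow> is_ideal E E"
  unfolding is_subring_def is_ideal_def by blast

lemma subring_mult_mem: "is_subring E \<Longrightarrow> x \<in> E \<Longrightarrow> y \<in> E \<Longrightarrow> x * y \<in> E"
  unfolding is_subring_def by blast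

lemma ideal_mult_mem: "is_ideal E I \<Longrightarrow> r \<in> E \<Longrightarrow> x \<in> I \<Longrightarrow> r * x \<in> I"
  unfolding is_ideal_def by blast

lemma ideal_sum_mem:
  assumes "is_ideal E I"
  shows "finite S \<Longrightarrow> (\<And>s. s \<in> S \<Longrightarrow> f s \<in> I) \<Longrightarrow> sum f S \<in> I"
  by (induction S rule: finite_induct) (use assms in \<open>auto simp: is_ideal_def\<close>)

lemma one_mem_ideal_iff: "is_subring E \<Longrightarrow> is_ideal E I \<Longrightarrow> 1 \<in> I \<longleftrightarrow> I = E"
  unfolding is_ideal_def is_subring_def by (metis mult.right_neutral subsetI subset_antisym)

lemma generator_mem_fin_gen:
  assumes "is_subring E" "finite S" "s \<in> S"
  shows "s \<in> fin_gen E S"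
proof -
  have "(\<Sum>t\<in>S. (if t = s then 1 else 0) * t) = (\<Sum>t\<in>S. if t = s then t else 0)"
    by (rule sum.cong) auto
  also have "\<dots> = s" using assms by simp
  finally show ?thesis unfolding fin_gen_def using assms
    by (intro CollectI exI[of _ "\<lambda>t. if t = s then 1 else 0"]) (auto simp: is_subring_def)
qed

lemma fin_gen_subset: "is_ideal E I \<Longrightarrow> finite S \<Longrightarrow> S \<subseteq> I \<Longrightarrow> fin_gen E S \<subseteq> I"
  unfolding fin_gen_def by (auto intro!: ideal_sum_mem simp: is_ideal_def)

lemma fin_gen_eq_zero_iff:
  assumes "is_subring E" "finite S"
  shows "fin_gen E S = {0} \<longleftrightarrow> S \<subseteq> {0}"
proof
  assume "S \<subseteq> {0}"
  then show "fin_gen E S = {0}" unfolding fin_gen_def using assms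
    by (force intro!: exI[of _ "\<lambda>_. 0"] intro: sum.neutral simp: is_subring_def)
qed (use generator_mem_fin_gen[OF assms] in blast)

lemma frac_inv_fin_gen:
  assumes "is_subring E" "finite S"
  shows "frac_inv E (fin_gen E S) = {y. \<forall>s\<in>S. y * s \<in> E}"
proof
  show "frac_inv E (fin_gen E S) \<subseteq> {y. \<forall>s\<in>S. y * s \<in> E}"
    using generator_mem_fin_gen[OF assms] unfolding frac_inv_def by auto
  show "{y. \<forall>s\<in>S. y * s \<in> E} \<subseteq> frac_inv E (fin_gen E S)"
  proof (clarsimp simp: frac_inv_def fin_gen_def)
    fix y c assume "\<forall>s\<in>S. y * s \<in> E" "\<forall>s\<in>S. c s \<in> E"
    then have "(\<Sum>s\<in>S. c s * (y * s)) \<in> E"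
      using assms by (intro ideal_sum_mem[OF subring_is_ideal]) (auto simp: is_subring_def)
    then show "y * (\<Sum>s\<in>S. c s * s) \<in> E"
      by (simp add: sum_distrib_left mult.left_commute)
  qed
qed

lemma v_closure_fin_gen:
  "is_subring E \<Longrightarrow> finite S \<Longrightarrow> v_closure E (fin_gen E S) = v_closure_gens E S"
  unfolding v_closure_def frac_inv_fin_gen by (simp add: frac_inv_def v_closure_gens_def mult.commute)

lemma t_closure_eq:
  assumes "is_subring E" "is_ideal E I"
  shows "t_closure E I = \<Union>{v_closure_gens E S | S. finite S \<and> S \<subseteq> I \<and> \<not> S \<subseteq> {0}}"
  unfolding t_closure_def using fin_gen_subset[OF assms(2)] fin_gen_eq_zero_iff[OF assms(1)]
    v_closure_fin_gen[OF assms(1)]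
  by (smt (verit) Collect_cong)

lemma ideal_subset_t_closure:
  assumes E: "is_subring E" and I: "is_ideal E I" "z \<in> I" "z \<noteq> 0"
  shows "I \<subseteq> t_closure E I"
proof
  fix x assume "x \<in> I"
  have "x \<in> v_closure_gens E {x, z}" by (auto simp: v_closure_gens_def mult.commute)
  then show "x \<in> t_closure E I" unfolding t_closure_eq[OF E I(1)]
    using \<open>x \<in> I\<close> I by (intro UnionI[of "v_closure_gens E {x, z}"]) auto
qed

lemma is_t_ideal_iff:
  assumes E: "is_subring E" and I: "is_ideal E I"
  shows "is_t_ideal E I \<longleftrightarrow>
    (\<forall>S. finite S \<longrightarrow> S \<subseteq> I \<longrightarrow> \<not> S \<subseteq> {0} \<longrightarrow> v_closure_gens E S \<subseteq> I)"
proof (cases "I = {0}")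
  case True
  then show ?thesis using I by (simp add: is_t_ideal_def)
next
  case False
  then obtain z where "z \<in> I" "z \<noteq> 0" using I by (auto simp: is_ideal_def)
  then have "I \<subseteq> t_closure E I" using ideal_subset_t_closure[OF E I] by blast
  then have "is_t_ideal E I \<longleftrightarrow> t_closure E I \<subseteq> I"
    using I False unfolding is_t_ideal_def by auto
  also have "\<dots> \<longleftrightarrow> (\<forall>S. finite S \<longrightarrow> S \<subseteq> I \<longrightarrow> \<not> S \<subseteq> {0} \<longrightarrow> v_closure_gens E S \<subseteq> I)"
    unfolding t_closure_eq[OF E I] Sup_le_iff by blast
  finally show ?thesis .
qed

lemma t_ideal_v_closure_gens_subset:
  assumes E: "is_subring E" and I: "is_t_ideal E I"
    and S: "finite S" "S \<subseteq> I" "\<not> S \<subseteq> {0}"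
  shows "v_closure_gens E S \<subseteq> I"
proof -
  have "is_ideal E I" using I by (simp add: is_t_ideal_def)
  then show ?thesis using I S is_t_ideal_iff[OF E] by blast
qed

lemma v_closure_gens_subset_carrier:
  assumes "S \<subseteq> E"
  shows "v_closure_gens E S \<subseteq> E"
proof
  fix x assume "x \<in> v_closure_gens E S"
  then have "(\<forall>s\<in>S. 1 * s \<in> E) \<longrightarrow> x * 1 \<in> E" unfolding v_closure_gens_def by blast
  then show "x \<in> E" using assms by auto
qed

lemma prime_t_ideal_is_ideal: "is_prime_t_ideal E P \<Longrightarrow> is_ideal E P"
  by (simp add: is_prime_t_ideal_def is_prime_ideal_def)

lemma prime_t_ideal_subset_carrier: "is_prime_t_ideal E P \<Longrightarrow> P \<subseteq> E"
  by (simp add: is_prime_t_ideal_def is_prime_ideal_def is_ideal_def)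

lemma t_ideal_colon:
  assumes E: "is_subring E" and M: "is_t_ideal E M" and "b \<noteq> 0"
  shows "is_t_ideal E {x \<in> E. b * x \<in> M}" (is "is_t_ideal E ?N")
proof -
  have Mi: "is_ideal E M" using M by (simp add: is_t_ideal_def)
  have Ni: "is_ideal E ?N"
    using Mi E unfolding is_ideal_def is_subring_def by (auto simp: distrib_left mult.left_commute)
  show ?thesis unfolding is_t_ideal_iff[OF E Ni]
  proof (intro allI impI subsetI)
    fix S x assume S: "finite S" "S \<subseteq> ?N" "\<not> S \<subseteq> {0}" and x: "x \<in> v_closure_gens E S"
    have "x \<in> E" using x v_closure_gens_subset_carrier[of S E] S(2) by blast
    have "b * x \<in> v_closure_gens E ((*) b ` S)"
      unfolding v_closure_gens_def
    proof (intro CollectI allI impI)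
      fix y assume "\<forall>s\<in>(*) b ` S. y * s \<in> E"
      then have "\<forall>s\<in>S. (y * b) * s \<in> E" by (simp add: mult.assoc)
      then have "x * (y * b) \<in> E" using x unfolding v_closure_gens_def by blast
      then show "b * x * y \<in> E" by (simp add: ac_simps)
    qed
    moreover have "\<not> (*) b ` S \<subseteq> {0}" "(*) b ` S \<subseteq> M" using S \<open>b \<noteq> 0\<close> by auto
    ultimately have "b * x \<in> M"
      using t_ideal_v_closure_gens_subset[OF E M] S(1) by blast
    then show "x \<in> ?N" using \<open>x \<in> E\<close> by blast
  qed
qed

lemma max_t_ideal_is_prime_t_ideal:
  assumes E: "is_subring E" and M: "is_max_t_ideal E M"
  shows "is_prime_t_ideal E M"
proof -
  have Mt: "is_t_ideal E M" and Mi: "is_ideal E M" and "M \<noteq> E"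
    using M by (auto simp: is_max_t_ideal_def is_t_ideal_def)
  have "a \<in> M \<or> b \<in> M" if ab: "a \<in> E" "b \<in> E" "a * b \<in> M" for a b
  proof (rule ccontr)
    assume "\<not> (a \<in> M \<or> b \<in> M)"
    then have "b \<noteq> 0" "a \<notin> M" "b \<notin> M" using Mi by (auto simp: is_ideal_def)
    define N where "N = {x \<in> E. b * x \<in> M}"
    have "is_t_ideal E N" unfolding N_def by (rule t_ideal_colon[OF E Mt \<open>b \<noteq> 0\<close>])
    moreover have "M \<subseteq> N" using Mi ab unfolding N_def is_ideal_def by (auto simp: mult.commute)
    moreover have "1 \<notin> N" using \<open>b \<notin> M\<close> unfolding N_def by simp
    ultimately have "N = M" using M E unfolding is_max_t_ideal_def is_subring_def by blast
    moreover have "a \<in> N" using ab unfolding N_def by (simp add: mult.commute)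
    ultimately show False using \<open>a \<notin> M\<close> by blast
  qed
  then show ?thesis using Mt Mi \<open>M \<noteq> E\<close> by (simp add: is_prime_t_ideal_def is_prime_ideal_def)
qed

lemma finite_subset_Union_chain:
  assumes "finite S" "C \<noteq> {}" "chain\<^sub>\<subseteq> C" "S \<subseteq> \<Union>C"
  shows "\<exists>X\<in>C. S \<subseteq> X"
  using assms
proof (induction S rule: finite_induct)
  case (insert x F)
  then obtain X Y where "X \<in> C" "F \<subseteq> X" "Y \<in> C" "x \<in> Y" by auto
  then show ?case using insert.prems(2) unfolding chain_subset_def
    by (metis insert_subset subset_trans)
qed auto

lemma t_ideal_Union_chain:
  assumes E: "is_subring E" and C: "C \<noteq> {}" "chain\<^sub>\<subseteq> C" "\<And>X. X \<in> C \<Longrightarrow> is_t_ideal E X"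
  shows "is_t_ideal E (\<Union>C)"
proof -
  have ideal: "\<And>X. X \<in> C \<Longrightarrow> is_ideal E X" using C(3) by (simp add: is_t_ideal_def)
  have "x + y \<in> \<Union>C" if xy: "x \<in> \<Union>C" "y \<in> \<Union>C" for x y
  proof -
    obtain X Y where "X \<in> C" "Y \<in> C" "x \<in> X" "y \<in> Y" using xy by blast
    then show ?thesis using C(2) ideal unfolding chain_subset_def is_ideal_def
      by (metis UnionI subsetD)
  qed
  then have I: "is_ideal E (\<Union>C)" using C(1) ideal unfolding is_ideal_def by blast
  show ?thesis unfolding is_t_ideal_iff[OF E I]
  proof (intro allI impI)
    fix S assume S: "finite S" "S \<subseteq> \<Union>C" "\<not> S \<subseteq> {0}"
    then obtain X where "X \<in> C" "S \<subseteq> X" using finite_subset_Union_chain[OF S(1) C(1,2)] by blast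
    then show "v_closure_gens E S \<subseteq> \<Union>C"
      using t_ideal_v_closure_gens_subset[OF E C(3) S(1) _ S(3)] by blast
  qed
qed

lemma max_t_ideal_above:
  assumes E: "is_subring E" and I: "is_t_ideal E I" "I \<noteq> E"
  shows "\<exists>M. is_max_t_ideal E M \<and> I \<subseteq> M"
proof -
  define A where "A = {N. is_t_ideal E N \<and> N \<noteq> E \<and> I \<subseteq> N}"
  have "\<exists>U\<in>A. \<forall>X\<in>C. X \<subseteq> U" if "C \<in> chains A" for C
  proof (cases "C = {}")
    case False
    have CA: "C \<subseteq> A" and ch: "chain\<^sub>\<subseteq> C" using that by (auto simp: chains_def)
    have "is_t_ideal E (\<Union>C)" using t_ideal_Union_chain[OF E False ch] CA by (simp add: A_def subset_eq)
    moreover have "1 \<notin> \<Union>C"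
      using CA one_mem_ideal_iff[OF E] unfolding A_def is_t_ideal_def by blast
    moreover have "I \<subseteq> \<Union>C" using CA False unfolding A_def by blast
    ultimately show ?thesis using E unfolding A_def is_subring_def by blast
  qed (use I A_def in blast)
  then obtain M where "M \<in> A" "\<forall>X\<in>A. M \<subseteq> X \<longrightarrow> X = M"
    using Zorn_Lemma2[of A] by blast
  then show ?thesis unfolding A_def is_max_t_ideal_def by blast
qed

definition is_t_chain :: "'k::field set \<Rightarrow> (nat \<Rightarrow> 'k set) \<Rightarrow> nat \<Rightarrow> bool" where
  "is_t_chain E c n \<longleftrightarrow>
     c n = {0} \<and> (\<forall>i<n. c (Suc i) \<subset> c i) \<and> (\<forall>i\<le>n. is_prime_t_ideal E (c i))"

lemma t_ht_eq_Sup_t_chains: "t_ht E P = Sup {enat n | n. \<exists>c. c 0 = P \<and> is_t_chain E c n}"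
  unfolding t_ht_def is_t_chain_def by simp

lemma t_chain_length_le_t_ht: "is_t_chain E c n \<Longrightarrow> enat n \<le> t_ht E (c 0)"
  unfolding t_ht_eq_Sup_t_chains by (rule Sup_upper) blast

lemma t_chain_length_le_t_ht_above:
  assumes c: "is_t_chain E c n" and M: "is_prime_t_ideal E M" "c 0 \<subseteq> M"
  shows "enat n \<le> t_ht E M"
proof (cases "c 0 = M")
  case True then show ?thesis using t_chain_length_le_t_ht[OF c] by simp
next
  case False
  define d where "d i = (case i of 0 \<Rightarrow> M | Suc j \<Rightarrow> c j)" for i
  have "is_t_chain E d (Suc n)"
    using c M False unfolding is_t_chain_def d_def by (auto split: nat.split)
  then have "enat (Suc n) \<le> t_ht E M" using t_chain_length_le_t_ht[of E d] by (simp add: d_def)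
  then show ?thesis by (meson Suc_n_not_le_n enat_ord_simps(1) nle_le order_trans)
qed

lemma t_dim_le_by_map:
  assumes F: "is_subring F"
    and prime: "\<And>P. is_prime_t_ideal E P \<Longrightarrow> is_prime_t_ideal F (\<phi> P)"
    and strict: "\<And>P Q. is_prime_t_ideal E P \<Longrightarrow> is_prime_t_ideal E Q \<Longrightarrow> P \<subset> Q \<Longrightarrow> \<phi> P \<subset> \<phi> Q"
    and zero: "\<phi> {0} = {0}"
  shows "t_dim E \<le> t_dim F"
  unfolding t_dim_def
proof (rule Sup_least)
  fix h assume "h \<in> {t_ht E P | P. is_max_t_ideal E P}"
  then obtain P where "h = t_ht E P" by blast
  show "h \<le> Sup {t_ht F M | M. is_max_t_ideal F M}"
    unfolding \<open>h = t_ht E P\<close> t_ht_eq_Sup_t_chains[of E P]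
  proof (rule Sup_least)
    fix m assume "m \<in> {enat n | n. \<exists>c. c 0 = P \<and> is_t_chain E c n}"
    then obtain n c where "m = enat n" and c: "is_t_chain E c n" by blast
    then have "is_t_chain F (\<phi> \<circ> c) n"
      using prime strict zero unfolding is_t_chain_def by auto
    moreover have "is_prime_t_ideal F (\<phi> (c 0))" using c prime unfolding is_t_chain_def by simp
    then obtain M where M: "is_max_t_ideal F M" "\<phi> (c 0) \<subseteq> M"
      using max_t_ideal_above[OF F] unfolding is_prime_t_ideal_def is_prime_ideal_def by blast
    ultimately have "enat n \<le> t_ht F M"
      using t_chain_length_le_t_ht_above max_t_ideal_is_prime_t_ideal[OF F M(1)] by fastforce
    also have "\<dots> \<le> Sup {t_ht F M | M. is_max_t_ideal F M}" using M(1) by (blast intro: Sup_upper)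
    finally show "m \<le> Sup {t_ht F M | M. is_max_t_ideal F M}" using \<open>m = enat n\<close> by simp
  qed
qed

lemma prime_t_ideal_contract:
  assumes E: "is_subring E" and F: "is_subring F" and "E \<subseteq> F"
    and v: "\<And>S. finite S \<Longrightarrow> v_closure_gens E S \<subseteq> v_closure_gens F S"
    and Q: "is_prime_t_ideal F Q"
  shows "is_prime_t_ideal E (Q \<inter> E)"
proof -
  have Qi: "is_ideal F Q" and Qt: "is_t_ideal F Q" and "Q \<noteq> F"
    and Qp: "\<forall>a\<in>F. \<forall>b\<in>F. a * b \<in> Q \<longrightarrow> a \<in> Q \<or> b \<in> Q"
    using Q by (auto simp: is_prime_t_ideal_def is_prime_ideal_def is_t_ideal_def)
  have I: "is_ideal E (Q \<inter> E)" using Qi E \<open>E \<subseteq> F\<close> unfolding is_ideal_def is_subring_def by blast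
  have "1 \<notin> Q" using one_mem_ideal_iff[OF F Qi] \<open>Q \<noteq> F\<close> by blast
  then have "Q \<inter> E \<noteq> E" using E by (auto simp: is_subring_def)
  moreover have "is_t_ideal E (Q \<inter> E)" unfolding is_t_ideal_iff[OF E I]
  proof (intro allI impI)
    fix S assume S: "finite S" "S \<subseteq> Q \<inter> E" "\<not> S \<subseteq> {0}"
    have "v_closure_gens E S \<subseteq> Q" using v[OF S(1)] t_ideal_v_closure_gens_subset[OF F Qt S(1) _ S(3)] S(2) by blast
    moreover have "v_closure_gens E S \<subseteq> E" using v_closure_gens_subset_carrier S(2) by blast
    ultimately show "v_closure_gens E S \<subseteq> Q \<inter> E" by blast
  qed
  ultimately show ?thesis using I Qp \<open>E \<subseteq> F\<close> by (auto simp: is_prime_t_ideal_def is_prime_ideal_def)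
qed

lemma subring_dom_ring: "is_subring (dom_ring :: 'a::idom fract set)"
  unfolding is_subring_def dom_ring_def by (auto simp: Zero_fract_def One_fract_def intro!: range_eqI)

lemma subring_poly_ring: "is_subring (poly_ring :: 'a::idom poly fract set)"
  unfolding is_subring_def poly_ring_def by (auto simp: Zero_fract_def One_fract_def intro!: range_eqI)

lemma mem_poly_ring_iff: "x \<in> poly_ring \<longleftrightarrow> (\<exists>f. x = Fract f 1)"
  unfolding poly_ring_def by auto

lemma mem_loc_poly_ring_iff: "x \<in> loc_poly_ring \<longleftrightarrow> (\<exists>f g. x = Fract f g \<and> poly g 0 = 1)"
  by (simp add: loc_poly_ring_def)

lemma poly_const_term_one_nonzero: "poly g 0 = (1::'a::idom) \<Longrightarrow> g \<noteq> 0"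
  by auto

lemma subring_loc_poly_ring: "is_subring (loc_poly_ring :: 'a::idom poly fract set)"
  unfolding is_subring_def
proof (intro conjI ballI)
  show "0 \<in> loc_poly_ring" unfolding mem_loc_poly_ring_iff
    by (intro exI[of _ 0] exI[of _ 1]) (simp add: Zero_fract_def)
  show "1 \<in> loc_poly_ring" unfolding mem_loc_poly_ring_iff
    by (intro exI[of _ 1] exI[of _ 1]) (simp add: One_fract_def)
  fix x y :: "'a poly fract"
  assume "x \<in> loc_poly_ring" "y \<in> loc_poly_ring"
  then obtain f g f' g' where xy: "x = Fract f g" "poly g 0 = 1" "y = Fract f' g'" "poly g' 0 = 1"
    unfolding mem_loc_poly_ring_iff by blast
  then have nz: "g \<noteq> 0" "g' \<noteq> 0" by auto
  show "x + y \<in> loc_poly_ring" unfolding mem_loc_poly_ring_iff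
    using xy nz by (intro exI[of _ "f * g' + f' * g"] exI[of _ "g * g'"]) simp
  show "x * y \<in> loc_poly_ring" unfolding mem_loc_poly_ring_iff
    using xy nz by (intro exI[of _ "f * f'"] exI[of _ "g * g'"]) simp
  show "- x \<in> loc_poly_ring" unfolding mem_loc_poly_ring_iff
    using xy nz by (intro exI[of _ "- f"] exI[of _ "g"]) simp
qed

lemma poly_ring_subset_loc_poly_ring: "(poly_ring :: 'a::idom poly fract set) \<subseteq> loc_poly_ring"
  unfolding poly_ring_def loc_poly_ring_def by force

lemma Fract_mem_dom_ring_iff:
  assumes "b \<noteq> 0"
  shows "Fract u b \<in> (dom_ring :: 'a::idom fract set) \<longleftrightarrow> b dvd u"
proof
  assume "Fract u b \<in> dom_ring"
  then obtain d where "Fract u b = Fract d 1" unfolding dom_ring_def by auto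
  then show "b dvd u" using assms by (simp add: eq_fract(1))
next
  assume "b dvd u"
  then obtain d where "u = b * d" by blast
  then have "Fract u b = Fract d 1" using assms by (simp add: eq_fract(1))
  then show "Fract u b \<in> dom_ring" unfolding dom_ring_def by auto
qed

lemma Fract_one_eq_zero_iff: "Fract a 1 = (0::'a::idom fract) \<longleftrightarrow> a = 0"
  by (simp add: Zero_fract_def eq_fract(1))

lemma Fract_mult_Fract_inverse: "g \<noteq> 0 \<Longrightarrow> Fract g 1 * Fract 1 g = (1::'a::idom fract)"
  by (simp add: One_fract_def eq_fract(1))

lemma Fract_inverse_mem_loc_poly_ring: "poly g 0 = 1 \<Longrightarrow> Fract 1 g \<in> loc_poly_ring"
  unfolding mem_loc_poly_ring_iff by blast

lemma Fract_const_mem_loc_poly_ring: "Fract g 1 \<in> loc_poly_ring"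
  using poly_ring_subset_loc_poly_ring unfolding poly_ring_def by blast

lemma mult_Fract_mult_Fract_inverse:
  assumes "poly g 0 = 1"
  shows "x * Fract g 1 * Fract 1 g = (x :: 'a::idom poly fract)"
proof -
  have "Fract g 1 * Fract 1 g = (1 :: 'a poly fract)"
    by (rule Fract_mult_Fract_inverse[OF poly_const_term_one_nonzero[OF assms]])
  then show ?thesis by (simp only: mult.assoc mult_1_right)
qed

definition is_prime_ideal_univ :: "'a::idom set \<Rightarrow> bool" where
  "is_prime_ideal_univ I \<longleftrightarrow> 0 \<in> I \<and> (\<forall>a\<in>I. \<forall>b\<in>I. a + b \<in> I) \<and> (\<forall>r. \<forall>a\<in>I. r * a \<in> I)
     \<and> 1 \<notin> I \<and> (\<forall>a b. a * b \<in> I \<longrightarrow> a \<in> I \<or> b \<in> I)"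

definition dom_preimage :: "'a::idom fract set \<Rightarrow> 'a set" where
  "dom_preimage P = {a. Fract a 1 \<in> P}"

lemma prime_ideal_univ_dom_preimage:
  assumes "is_prime_ideal (dom_ring :: 'a::idom fract set) P"
  shows "is_prime_ideal_univ (dom_preimage P)"
proof -
  have D: "\<And>a::'a. Fract a 1 \<in> dom_ring" by (simp add: dom_ring_def)
  have I: "is_ideal dom_ring P" "P \<noteq> dom_ring"
    and prime: "\<forall>a\<in>dom_ring. \<forall>b\<in>dom_ring. a * b \<in> P \<longrightarrow> a \<in> P \<or> b \<in> P"
    using assms by (auto simp: is_prime_ideal_def)
  have "1 \<notin> P" using one_mem_ideal_iff[OF subring_dom_ring I(1)] I(2) by simp
  have "0 \<in> P" "\<forall>x\<in>P. \<forall>y\<in>P. x + y \<in> P" "\<forall>r\<in>dom_ring. \<forall>x\<in>P. r * x \<in> P"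
    using I(1) by (auto simp: is_ideal_def)
  then show ?thesis
    unfolding is_prime_ideal_univ_def dom_preimage_def
  proof (intro conjI allI ballI impI; simp only: mem_Collect_eq)
    show "Fract 0 1 \<in> P" using \<open>0 \<in> P\<close> by (simp add: Zero_fract_def)
    show "Fract 1 1 \<notin> P" using \<open>1 \<notin> P\<close> by (simp add: One_fract_def)
    fix a b :: 'a
    show "Fract (a + b) 1 \<in> P" if "Fract a 1 \<in> P" "Fract b 1 \<in> P"
    proof -
      have "Fract a 1 + Fract b 1 \<in> P" using that \<open>\<forall>x\<in>P. \<forall>y\<in>P. x + y \<in> P\<close> by blast
      then show ?thesis by simp
    qed
    show "Fract (a * b) 1 \<in> P" if "Fract b 1 \<in> P"
    proof -
      have "Fract a 1 * Fract b 1 \<in> P" using that D \<open>\<forall>r\<in>dom_ring. \<forall>x\<in>P. r * x \<in> P\<close> by blast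
      then show ?thesis by simp
    qed
    show "Fract a 1 \<in> P \<or> Fract b 1 \<in> P" if "Fract (a * b) 1 \<in> P"
    proof -
      have "Fract a 1 * Fract b 1 \<in> P" using that by simp
      then show ?thesis using D prime by blast
    qed
  qed
qed

lemma prime_ideal_univ_sum_mem:
  assumes "is_prime_ideal_univ I"
  shows "finite A \<Longrightarrow> (\<And>k. k \<in> A \<Longrightarrow> f k \<in> I) \<Longrightarrow> sum f A \<in> I"
  by (induction A rule: finite_induct) (use assms in \<open>auto simp: is_prime_ideal_univ_def\<close>)

definition poly_over :: "'a::idom set \<Rightarrow> 'a poly set" where
  "poly_over I = {f. \<forall>i. coeff f i \<in> I}"

lemma poly_over_zero: "is_prime_ideal_univ I \<Longrightarrow> 0 \<in> poly_over I"
  by (simp add: poly_over_def is_prime_ideal_univ_def)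

lemma poly_over_add: "is_prime_ideal_univ I \<Longrightarrow> f \<in> poly_over I \<Longrightarrow> g \<in> poly_over I \<Longrightarrow> f + g \<in> poly_over I"
  by (simp add: poly_over_def is_prime_ideal_univ_def)

lemma poly_over_mult:
  assumes "is_prime_ideal_univ I" "f \<in> poly_over I"
  shows "r * f \<in> poly_over I"
  unfolding poly_over_def mem_Collect_eq coeff_mult
  using assms by (auto intro!: prime_ideal_univ_sum_mem simp: poly_over_def is_prime_ideal_univ_def)

lemma poly_const_term_one_notin_poly_over:
  "is_prime_ideal_univ I \<Longrightarrow> poly g 0 = 1 \<Longrightarrow> g \<notin> poly_over I"
  unfolding poly_over_def is_prime_ideal_univ_def poly_0_coeff_0 by (metis mem_Collect_eq)

text \<open>Gauss: if \<open>p\<close> and \<open>q\<close> have coefficients outside \<open>I\<close>, take the first such ones, of index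
  \<open>i\<close> and \<open>j\<close>; the coefficient of \<open>X^(i+j)\<close> in \<open>p * q\<close> is their product modulo \<open>I\<close>.\<close>

lemma poly_over_prime:
  assumes I: "is_prime_ideal_univ I" and pq: "p * q \<in> poly_over I"
  shows "p \<in> poly_over I \<or> q \<in> poly_over I"
proof (rule ccontr)
  assume "\<not> (p \<in> poly_over I \<or> q \<in> poly_over I)"
  then have ex: "\<exists>i. coeff p i \<notin> I" "\<exists>j. coeff q j \<notin> I" by (auto simp: poly_over_def)
  define i where "i = (LEAST i. coeff p i \<notin> I)"
  define j where "j = (LEAST j. coeff q j \<notin> I)"
  have pi: "coeff p i \<notin> I" "\<And>k. k < i \<Longrightarrow> coeff p k \<in> I"
    using LeastI_ex[OF ex(1)] not_less_Least unfolding i_def by blast+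
  have qj: "coeff q j \<notin> I" "\<And>k. k < j \<Longrightarrow> coeff q k \<in> I"
    using LeastI_ex[OF ex(2)] not_less_Least unfolding j_def by blast+
  define rest where "rest = (\<Sum>k\<in>{..i+j} - {i}. coeff p k * coeff q (i + j - k))"
  have "coeff (p * q) (i + j) = coeff p i * coeff q j + rest"
    unfolding coeff_mult rest_def by (subst sum.remove[of _ i]) auto
  moreover have "rest \<in> I" unfolding rest_def
  proof (rule prime_ideal_univ_sum_mem[OF I], simp)
    fix k assume k: "k \<in> {..i+j} - {i}"
    show "coeff p k * coeff q (i + j - k) \<in> I"
    proof (cases "k < i")
      case True then show ?thesis using pi(2) I unfolding is_prime_ideal_univ_def by (metis mult.commute)
    next
      case False then have "i + j - k < j" using k by auto
      then show ?thesis using qj(2) I unfolding is_prime_ideal_univ_def by blast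
    qed
  qed
  moreover have "coeff (p * q) (i + j) \<in> I" using pq by (simp add: poly_over_def)
  ultimately have "coeff p i * coeff q j \<in> I"
    using I unfolding is_prime_ideal_univ_def by (metis add_diff_cancel_right' diff_conv_add_uminus minus_mult_left mult_1)
  then show False using I pi(1) qj(1) unfolding is_prime_ideal_univ_def by blast
qed

definition loc_ext :: "'a::idom fract set \<Rightarrow> 'a poly fract set" where
  "loc_ext P = {Fract f g | f g. poly g 0 = 1 \<and> f \<in> poly_over (dom_preimage P)}"

lemma mem_loc_ext_iff:
  "x \<in> loc_ext P \<longleftrightarrow> (\<exists>f g. x = Fract f g \<and> poly g 0 = 1 \<and> f \<in> poly_over (dom_preimage P))"
  unfolding loc_ext_def by simp

lemma loc_ext_subset: "loc_ext P \<subseteq> loc_poly_ring"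
  unfolding loc_ext_def loc_poly_ring_def by blast

text \<open>Membership does not depend on the chosen representation, because \<open>g\<close> is not in \<open>I[X]\<close>.\<close>

lemma loc_ext_numerator:
  assumes I: "is_prime_ideal_univ (dom_preimage P)"
    and x: "x \<in> loc_ext P" "x = Fract f g" "poly g 0 = 1"
  shows "f \<in> poly_over (dom_preimage P)"
proof -
  obtain h k where hk: "x = Fract h k" "poly k 0 = 1" "h \<in> poly_over (dom_preimage P)"
    using x(1) unfolding mem_loc_ext_iff by blast
  have "g \<noteq> 0" "k \<noteq> 0" using hk x by auto
  then have "f * k = g * h" using hk x by (simp add: eq_fract(1) mult.commute)
  then have "f * k \<in> poly_over (dom_preimage P)" using poly_over_mult[OF I hk(3)] by simp
  then show ?thesis using poly_over_prime[OF I] poly_const_term_one_notin_poly_over[OF I hk(2)] by blast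
qed

lemma loc_ext_prime_ideal:
  assumes I: "is_prime_ideal_univ (dom_preimage P)"
  shows "is_prime_ideal loc_poly_ring (loc_ext P)"
  unfolding is_prime_ideal_def is_ideal_def
proof (intro conjI ballI impI)
  show "loc_ext P \<subseteq> loc_poly_ring" by (rule loc_ext_subset)
  show "0 \<in> loc_ext P" unfolding mem_loc_ext_iff using poly_over_zero[OF I]
    by (intro exI[of _ 0] exI[of _ 1]) (simp add: Zero_fract_def)
  show "loc_ext P \<noteq> loc_poly_ring"
  proof
    assume "loc_ext P = loc_poly_ring"
    moreover have "1 \<in> loc_poly_ring" using subring_loc_poly_ring unfolding is_subring_def by blast
    ultimately have "Fract 1 1 \<in> loc_ext P" by (simp add: One_fract_def)
    then show False
      using loc_ext_numerator[OF I] poly_const_term_one_notin_poly_over[OF I, of 1] by fastforce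
  qed
next
  fix x y :: "'a poly fract" assume "x \<in> loc_ext P" "y \<in> loc_ext P"
  then obtain f g f' g' where xy: "x = Fract f g" "poly g 0 = 1" "f \<in> poly_over (dom_preimage P)"
     "y = Fract f' g'" "poly g' 0 = 1" "f' \<in> poly_over (dom_preimage P)"
    unfolding mem_loc_ext_iff by blast
  then have "f * g' + f' * g \<in> poly_over (dom_preimage P)"
    using poly_over_add[OF I] poly_over_mult[OF I] by (simp add: mult.commute)
  moreover have "g \<noteq> 0" "g' \<noteq> 0" using xy by auto
  ultimately show "x + y \<in> loc_ext P" unfolding mem_loc_ext_iff using xy
    by (intro exI[of _ "f * g' + f' * g"] exI[of _ "g * g'"]) simp
next
  fix r x :: "'a poly fract" assume "r \<in> loc_poly_ring" "x \<in> loc_ext P"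
  then obtain f g h k where xr: "x = Fract f g" "poly g 0 = 1" "f \<in> poly_over (dom_preimage P)"
     "r = Fract h k" "poly k 0 = 1"
    unfolding mem_loc_ext_iff mem_loc_poly_ring_iff by blast
  then show "r * x \<in> loc_ext P" unfolding mem_loc_ext_iff
    using poly_over_mult[OF I] by (intro exI[of _ "h * f"] exI[of _ "k * g"]) simp
next
  fix a b :: "'a poly fract"
  assume ab: "a \<in> loc_poly_ring" "b \<in> loc_poly_ring" "a * b \<in> loc_ext P"
  then obtain f g f' g' where xy: "a = Fract f g" "poly g 0 = 1" "b = Fract f' g'" "poly g' 0 = 1"
    unfolding mem_loc_poly_ring_iff by blast
  then have "f * f' \<in> poly_over (dom_preimage P)"
    using loc_ext_numerator[OF I ab(3)] by simp
  then show "a \<in> loc_ext P \<or> b \<in> loc_ext P"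
    using poly_over_prime[OF I] xy unfolding mem_loc_ext_iff by blast
qed

lemma loc_ext_zero: "loc_ext {0::'a::idom fract} = {0}"
proof -
  have "dom_preimage {0::'a fract} = {0}"
    unfolding dom_preimage_def by (auto simp: Fract_one_eq_zero_iff)
  moreover have "poly_over {0::'a} = {0}"
    unfolding poly_over_def by (auto intro: poly_eqI)
  ultimately have "loc_ext {0::'a fract} = {Fract 0 g | g. poly g 0 = 1}"
    unfolding loc_ext_def by simp
  also have "\<dots> = {0}" by (auto simp: fract_collapse intro!: exI[of _ 1])
  finally show ?thesis .
qed

lemma loc_ext_strict_mono:
  assumes I: "is_prime_ideal_univ (dom_preimage P')" and sub: "P' \<subset> P" "P \<subseteq> dom_ring"
  shows "loc_ext P' \<subset> loc_ext P"
proof -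
  have "poly_over (dom_preimage P') \<subseteq> poly_over (dom_preimage P)"
    using sub unfolding poly_over_def dom_preimage_def by auto
  then have "loc_ext P' \<subseteq> loc_ext P" unfolding loc_ext_def by blast
  moreover obtain a where a: "Fract a 1 \<in> P" "Fract a 1 \<notin> P'"
    using sub unfolding dom_ring_def by auto
  have "0 \<in> dom_preimage P" using I sub unfolding is_prime_ideal_univ_def dom_preimage_def by auto
  then have "[:a:] \<in> poly_over (dom_preimage P)"
    using a unfolding poly_over_def dom_preimage_def by (auto simp: coeff_pCons split: nat.split)
  then have "Fract [:a:] 1 \<in> loc_ext P" unfolding mem_loc_ext_iff by fastforce
  moreover have "Fract [:a:] 1 \<notin> loc_ext P'"
  proof
    assume "Fract [:a:] 1 \<in> loc_ext P'"
    then have "coeff [:a:] 0 \<in> dom_preimage P'"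
      using loc_ext_numerator[OF I] unfolding poly_over_def by fastforce
    then show False using a unfolding dom_preimage_def by simp
  qed
  ultimately show ?thesis by blast
qed

lemma dvd_coeffs_mult_cancel:
  fixes w g :: "'a::idom poly"
  assumes g: "poly g 0 = 1" and dvd: "\<And>n. b dvd coeff (w * g) n"
  shows "b dvd coeff w n"
proof (induction n rule: less_induct)
  case (less n)
  have "coeff (w * g) n = (\<Sum>i<n. coeff w i * coeff g (n - i)) + coeff w n * coeff g 0"
    unfolding coeff_mult lessThan_Suc_atMost[symmetric] by simp
  also have "\<dots> = coeff w n + (\<Sum>i<n. coeff w i * coeff g (n - i))"
    using g by (simp add: poly_0_coeff_0 add.commute)
  finally have eq: "coeff (w * g) n = coeff w n + (\<Sum>i<n. coeff w i * coeff g (n - i))" .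
  have "b dvd (\<Sum>i<n. coeff w i * coeff g (n - i))" using less by (intro dvd_sum) auto
  then show ?case using dvd[of n] unfolding eq by (simp add: dvd_add_left_iff)
qed

text \<open>The content argument behind the t-property of \<open>P[X]\<^sub>A\<close>: a denominator with constant
  term 1 cannot absorb a constant divisor of the numerator (\<open>dvd_coeffs_mult_cancel\<close>).\<close>

lemma Fract_const_mult_mem_loc_poly_ring_iff:
  fixes a b :: "'a::idom"
  assumes b: "b \<noteq> 0" and g: "poly g 0 = 1"
  shows "Fract [:a:] [:b:] * Fract f g \<in> loc_poly_ring \<longleftrightarrow>
    (\<forall>n. Fract a b * Fract (coeff f n) 1 \<in> dom_ring)"
proof -
  have g0: "g \<noteq> 0" and b0: "[:b:] \<noteq> 0" using b g by auto
  have "(\<forall>n. Fract a b * Fract (coeff f n) 1 \<in> dom_ring) \<longleftrightarrow> [:b:] dvd smult a f"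
    using Fract_mem_dom_ring_iff[OF b] by (simp add: const_poly_dvd_iff)
  also have "\<dots> \<longleftrightarrow> Fract [:a:] [:b:] * Fract f g \<in> loc_poly_ring"
  proof
    assume "[:b:] dvd smult a f"
    then obtain h where h: "smult a f = [:b:] * h" by (elim dvdE)
    have "Fract [:a:] [:b:] * Fract f g = Fract ([:b:] * h) ([:b:] * g)" using h by simp
    also have "\<dots> = Fract h g" by (rule mult_fract_cancel[OF b0])
    finally show "Fract [:a:] [:b:] * Fract f g \<in> loc_poly_ring"
      unfolding mem_loc_poly_ring_iff using g by blast
  next
    assume "Fract [:a:] [:b:] * Fract f g \<in> loc_poly_ring"
    then obtain h k where hk: "Fract (smult a f) ([:b:] * g) = Fract h k" "poly k 0 = 1"
      unfolding mem_loc_poly_ring_iff by auto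
    then have "k \<noteq> 0" by auto
    then have "smult a f * k = [:b:] * (h * g)"
      using hk(1) g0 b0 by (simp add: eq_fract(1) ac_simps)
    then have "\<And>n. b dvd coeff (smult a f * k) n" by (metis const_poly_dvd_iff dvd_triv_left)
    then show "[:b:] dvd smult a f"
      unfolding const_poly_dvd_iff using dvd_coeffs_mult_cancel[OF hk(2)] by blast
  qed
  finally show ?thesis by (rule sym)
qed

lemma coeff_mem_v_closure_gens_coeffs:
  assumes S: "\<And>s. s \<in> S \<Longrightarrow> s = Fract (fs s) (gs s) \<and> poly (gs s) 0 = 1"
    and x: "Fract F G \<in> v_closure_gens loc_poly_ring S" and G: "poly G 0 = 1"
  shows "Fract (coeff F j) 1 \<in> v_closure_gens dom_ring (\<Union>s\<in>S. range (\<lambda>i. Fract (coeff (fs s) i) 1))"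
  unfolding v_closure_gens_def
proof (intro CollectI allI impI)
  fix y :: "'a::idom fract"
  assume y_coeffs: "\<forall>c\<in>(\<Union>s\<in>S. range (\<lambda>i. Fract (coeff (fs s) i) 1)). y * c \<in> dom_ring"
  obtain a b where y: "y = Fract a b" "b \<noteq> 0" by (cases y) auto
  have "\<forall>s\<in>S. Fract [:a:] [:b:] * s \<in> loc_poly_ring"
  proof
    fix s assume "s \<in> S"
    then have s: "s = Fract (fs s) (gs s)" "poly (gs s) 0 = 1" using S by blast+
    have "\<forall>n. Fract a b * Fract (coeff (fs s) n) 1 \<in> dom_ring"
      using y_coeffs \<open>s \<in> S\<close> y(1) by blast
    then have "Fract [:a:] [:b:] * Fract (fs s) (gs s) \<in> loc_poly_ring"
      using Fract_const_mult_mem_loc_poly_ring_iff[OF y(2) s(2)] by blast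
    moreover have "Fract [:a:] [:b:] * s = Fract [:a:] [:b:] * Fract (fs s) (gs s)"
      by (rule arg_cong[OF s(1)])
    ultimately show "Fract [:a:] [:b:] * s \<in> loc_poly_ring" by simp
  qed
  then have "Fract F G * Fract [:a:] [:b:] \<in> loc_poly_ring"
    using x unfolding v_closure_gens_def by blast
  then show "Fract (coeff F j) 1 * y \<in> dom_ring"
    using Fract_const_mult_mem_loc_poly_ring_iff[OF y(2) G] y(1) by (simp add: mult.commute)
qed

lemma finite_range_coeff: "finite (range (coeff p))"
proof -
  have "coeff p i \<in> insert 0 (coeff p ` {..degree p})" for i
    by (cases "i \<le> degree p") (auto simp: coeff_eq_0)
  then have "range (coeff p) \<subseteq> insert 0 (coeff p ` {..degree p})" by blast
  then show ?thesis by (rule finite_subset) simp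
qed

lemma loc_ext_t_ideal:
  assumes P: "is_prime_t_ideal (dom_ring :: 'a::idom fract set) P"
  shows "is_t_ideal loc_poly_ring (loc_ext P)"
proof -
  have Pt: "is_t_ideal dom_ring P" and I: "is_prime_ideal_univ (dom_preimage P)"
    using P prime_ideal_univ_dom_preimage by (auto simp: is_prime_t_ideal_def)
  have ideal: "is_ideal loc_poly_ring (loc_ext P)"
    using loc_ext_prime_ideal[OF I] by (simp add: is_prime_ideal_def)
  show ?thesis unfolding is_t_ideal_iff[OF subring_loc_poly_ring ideal]
  proof (intro allI impI subsetI)
    fix S x assume S: "finite S" "S \<subseteq> loc_ext P" "\<not> S \<subseteq> {0}"
      and x: "x \<in> v_closure_gens loc_poly_ring S"
    have "\<forall>s\<in>S. \<exists>f. \<exists>g. s = Fract f g \<and> poly g 0 = 1 \<and> f \<in> poly_over (dom_preimage P)"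
      using S(2) unfolding subset_eq mem_loc_ext_iff by blast
    then obtain fs where "\<forall>s\<in>S. \<exists>g. s = Fract (fs s) g \<and> poly g 0 = 1 \<and> fs s \<in> poly_over (dom_preimage P)"
      by (rule bchoice[THEN exE])
    then obtain gs where fg: "\<forall>s\<in>S. s = Fract (fs s) (gs s) \<and> poly (gs s) 0 = 1 \<and> fs s \<in> poly_over (dom_preimage P)"
      by (rule bchoice[THEN exE])
    then have rep: "\<And>s. s \<in> S \<Longrightarrow> s = Fract (fs s) (gs s) \<and> poly (gs s) 0 = 1" by blast
    have "x \<in> loc_poly_ring"
      using x v_closure_gens_subset_carrier S(2) loc_ext_subset by blast
    then obtain F G where FG: "x = Fract F G" "poly G 0 = 1" unfolding mem_loc_poly_ring_iff by blast
    define C where "C = (\<Union>s\<in>S. range (\<lambda>i. Fract (coeff (fs s) i) (1::'a)))"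
    have "finite (range (\<lambda>i. Fract (coeff f i) (1::'a)))" for f :: "'a poly"
    proof -
      have "range (\<lambda>i. Fract (coeff f i) (1::'a)) = (\<lambda>c. Fract c 1) ` range (coeff f)"
        by (simp only: image_image)
      then show ?thesis by (simp add: finite_range_coeff)
    qed
    then have "finite C" unfolding C_def using S(1) by blast
    moreover have "C \<subseteq> P"
    proof
      fix c assume "c \<in> C"
      then obtain s i where "s \<in> S" "c = Fract (coeff (fs s) i) 1" unfolding C_def by blast
      then show "c \<in> P" using fg unfolding poly_over_def dom_preimage_def by blast
    qed
    moreover have "\<not> C \<subseteq> {0}"
    proof
      assume "C \<subseteq> {0}"
      have "\<forall>s\<in>S. fs s = 0"
      proof (intro ballI poly_eqI)
        fix s n assume "s \<in> S"
        then have "Fract (coeff (fs s) n) 1 \<in> C" unfolding C_def by blast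
        then show "coeff (fs s) n = coeff 0 n" using \<open>C \<subseteq> {0}\<close> Fract_one_eq_zero_iff by auto
      qed
      obtain s where "s \<in> S" "s \<noteq> 0" using S(3) by blast
      have "s = Fract (fs s) (gs s)" using rep \<open>s \<in> S\<close> by blast
      also have "\<dots> = 0" using \<open>\<forall>s\<in>S. fs s = 0\<close> \<open>s \<in> S\<close> by (simp add: fract_collapse)
      finally show False using \<open>s \<noteq> 0\<close> by blast
    qed
    ultimately have "v_closure_gens dom_ring C \<subseteq> P"
      by (rule t_ideal_v_closure_gens_subset[OF subring_dom_ring Pt])
    moreover have "Fract (coeff F j) 1 \<in> v_closure_gens dom_ring C" for j
      unfolding C_def by (rule coeff_mem_v_closure_gens_coeffs[OF rep x[unfolded FG(1)] FG(2)])
    ultimately have "Fract (coeff F j) 1 \<in> P" for j by blast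
    then have "F \<in> poly_over (dom_preimage P)" unfolding poly_over_def dom_preimage_def by blast
    then show "x \<in> loc_ext P" unfolding mem_loc_ext_iff using FG by blast
  qed
qed

lemma loc_poly_ring_clear_denominator:
  assumes "x \<in> (loc_poly_ring :: 'a::idom poly fract set)"
  shows "\<exists>g. poly g 0 = 1 \<and> x * Fract g 1 \<in> poly_ring"
proof -
  obtain f g where fg: "x = Fract f g" "poly g 0 = 1" using assms unfolding mem_loc_poly_ring_iff by blast
  then have "x * Fract g 1 = Fract f 1"
    using poly_const_term_one_nonzero[OF fg(2)] by (simp add: eq_fract(1))
  then show ?thesis using fg(2) unfolding mem_poly_ring_iff by blast
qed

lemma loc_poly_ring_clear_denominators:
  "finite S \<Longrightarrow> S \<subseteq> (loc_poly_ring :: 'a::idom poly fract set) \<Longrightarrow>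
    \<exists>g. poly g 0 = 1 \<and> (\<forall>s\<in>S. s * Fract g 1 \<in> poly_ring)"
proof (induction S rule: finite_induct)
  case empty
  show ?case by (intro exI[of _ 1]) simp
next
  case (insert a S)
  then obtain g where g: "poly g 0 = 1" "\<forall>s\<in>S. s * Fract g 1 \<in> poly_ring" by auto
  obtain h where h: "poly h 0 = 1" "a * Fract h 1 \<in> poly_ring"
    using loc_poly_ring_clear_denominator insert.prems by blast
  note mult = subring_mult_mem[OF subring_poly_ring]
  have Fract_poly: "\<And>p. Fract p 1 \<in> poly_ring" unfolding mem_poly_ring_iff by blast
  have "s * Fract (g * h) 1 \<in> poly_ring" if "s \<in> insert a S" for s
  proof (cases "s = a")
    case True
    have "s * Fract (g * h) 1 = (a * Fract h 1) * Fract g 1" using True by (simp add: ac_simps)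
    then show ?thesis using mult[OF h(2) Fract_poly] by simp
  next
    case False
    have eq: "s * Fract (g * h) 1 = (s * Fract g 1) * Fract h 1" by (simp add: ac_simps)
    have "s * Fract g 1 \<in> poly_ring" using g(2) False that by simp
    then show ?thesis unfolding eq by (rule mult[OF _ Fract_poly])
  qed
  moreover have "poly (g * h) 0 = 1" using g h by simp
  ultimately show ?case by blast
qed

lemma v_closure_gens_poly_ring_subset:
  assumes "finite S"
  shows "v_closure_gens (poly_ring :: 'a::idom poly fract set) S \<subseteq> v_closure_gens loc_poly_ring S"
proof (unfold v_closure_gens_def, intro subsetI CollectI allI impI)
  fix x y :: "'a poly fract"
  assume x: "x \<in> {x. \<forall>y. (\<forall>s\<in>S. y * s \<in> poly_ring) \<longrightarrow> x * y \<in> poly_ring}"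
    and y: "\<forall>s\<in>S. y * s \<in> loc_poly_ring"
  obtain g where g: "poly g 0 = 1" "\<forall>s\<in>(*) y ` S. s * Fract g 1 \<in> poly_ring"
    using loc_poly_ring_clear_denominators[of "(*) y ` S"] assms y by blast
  then have "\<forall>s\<in>S. (y * Fract g 1) * s \<in> poly_ring" by (simp add: ac_simps)
  then have "x * y * Fract g 1 \<in> poly_ring" using x by (simp add: mult.assoc)
  then have "x * y * Fract g 1 * Fract 1 g \<in> loc_poly_ring"
    using poly_ring_subset_loc_poly_ring Fract_inverse_mem_loc_poly_ring[OF g(1)]
    by (blast intro: subring_mult_mem[OF subring_loc_poly_ring])
  then show "x * y \<in> loc_poly_ring" unfolding mult_Fract_mult_Fract_inverse[OF g(1)] .
qed

lemma contract_poly_ring_strict_mono: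
  fixes Q :: "'a::idom poly fract set"
  assumes sub: "Q' \<subset> Q" and Q': "is_ideal loc_poly_ring Q'" and Q: "is_ideal loc_poly_ring Q"
  shows "Q' \<inter> poly_ring \<subset> Q \<inter> poly_ring"
proof -
  obtain z where z: "z \<in> Q" "z \<notin> Q'" using sub by blast
  then have "z \<in> loc_poly_ring" using Q unfolding is_ideal_def by blast
  then obtain g where g: "poly g 0 = 1" "z * Fract g 1 \<in> poly_ring"
    using loc_poly_ring_clear_denominator by blast
  have "z * Fract g 1 \<in> Q"
    using ideal_mult_mem[OF Q Fract_const_mem_loc_poly_ring z(1)] by (simp add: mult.commute)
  moreover have "z * Fract g 1 \<notin> Q'"
  proof
    assume "z * Fract g 1 \<in> Q'"
    then have "z * Fract g 1 * Fract 1 g \<in> Q'"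
      using ideal_mult_mem[OF Q' Fract_inverse_mem_loc_poly_ring[OF g(1)], of "z * Fract g 1"]
      by (simp only: mult.commute)
    then show False using z(2) unfolding mult_Fract_mult_Fract_inverse[OF g(1)] by blast
  qed
  ultimately show ?thesis using g(2) sub by blast
qed

lemma loc_ext_prime_t_ideal:
  assumes "is_prime_t_ideal (dom_ring :: 'a::idom fract set) P"
  shows "is_prime_t_ideal loc_poly_ring (loc_ext P)"
  using assms loc_ext_t_ideal loc_ext_prime_ideal prime_ideal_univ_dom_preimage
  unfolding is_prime_t_ideal_def by blast

lemma t_dim_dom_ring_le: "t_dim (dom_ring :: 'a::idom fract set) \<le> t_dim (loc_poly_ring :: 'a poly fract set)"
proof (rule t_dim_le_by_map[where \<phi> = loc_ext, OF subring_loc_poly_ring loc_ext_prime_t_ideal _ loc_ext_zero])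
  fix P Q :: "'a fract set"
  assume "is_prime_t_ideal dom_ring P" "is_prime_t_ideal dom_ring Q" "P \<subset> Q"
  then show "loc_ext P \<subset> loc_ext Q"
    by (intro loc_ext_strict_mono prime_ideal_univ_dom_preimage prime_t_ideal_subset_carrier)
      (auto simp: is_prime_t_ideal_def)
qed

lemma contract_prime_t_ideal:
  "is_prime_t_ideal loc_poly_ring Q \<Longrightarrow> is_prime_t_ideal poly_ring (Q \<inter> (poly_ring :: 'a::idom poly fract set))"
  by (rule prime_t_ideal_contract[OF subring_poly_ring subring_loc_poly_ring
        poly_ring_subset_loc_poly_ring v_closure_gens_poly_ring_subset])

lemma t_dim_loc_poly_ring_le: "t_dim (loc_poly_ring :: 'a::idom poly fract set) \<le> t_dim (poly_ring :: 'a poly fract set)"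
proof (rule t_dim_le_by_map[where \<phi> = "\<lambda>Q. Q \<inter> poly_ring", OF subring_poly_ring contract_prime_t_ideal])
  show "{0} \<inter> poly_ring = {0::'a poly fract}"
    using subring_poly_ring by (auto simp: is_subring_def)
next
  fix P Q :: "'a poly fract set"
  assume "is_prime_t_ideal loc_poly_ring P" "is_prime_t_ideal loc_poly_ring Q" "P \<subset> Q"
  then show "P \<inter> poly_ring \<subset> Q \<inter> poly_ring"
    by (intro contract_poly_ring_strict_mono prime_t_ideal_is_ideal)
qed

theorem mainTheorem14:
  shows "t_dim (dom_ring :: 'a::idom fract set) \<le> t_dim (loc_poly_ring :: 'a poly fract set)
       \<and> t_dim (loc_poly_ring :: 'a poly fract set) \<le> t_dim (poly_ring :: 'a poly fract set)"
  by (intro conjI t_dim_dom_ring_le t_dim_loc_poly_ring_le)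

end
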